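(* For all integers $m\ge 4$ and $n\ge 10$, the complete bipartite graph $K_{m,n}$ belongs to $\mathcal{S}_3$.
   Context: $G\in\mathcal{S}_3$ means: for every $\beta:V(G)\to\mathbb{Z}_3$ with $\sum_v\beta(v)\equiv0\pmod3$ there is a strongly-connected orientation $D$ of $G$ with $d^+_D(v)-d^-_D(v)\equiv\beta(v)\pmod3$ for all $v$. *)

theory Defs
  imports Main
begin

definition simple_graph :: "'a set \<Rightarrow> 'a set set \<Rightarrow> bool" where
  "simple_graph V E \<longleftrightarrow> finite V \<and> (\<forall>e\<in>E. e \<subseteq> V \<and> card e = 2)"

definition is_orientation :: "'a set set \<Rightarrow> ('a \<times> 'a) set \<Rightarrow> bool" where
  "is_orientation E D \<longleftrightarrow>
     (\<forall>(u,v)\<in>D. {u,v} \<in> E \<and> u \<noteq> v) \<and>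
     (\<forall>u v. {u,v} \<in> E \<and> u \<noteq> v \<longrightarrow> ((u,v) \<in> D \<longleftrightarrow> (v,u) \<notin> D))"

definition strongly_connected :: "'a set \<Rightarrow> ('a \<times> 'a) set \<Rightarrow> bool" where
  "strongly_connected V D \<longleftrightarrow> (\<forall>u\<in>V. \<forall>v\<in>V. (u,v) \<in> D\<^sup>*)"

definition out_deg :: "('a \<times> 'a) set \<Rightarrow> 'a \<Rightarrow> nat" where
  "out_deg D v = card {w. (v,w) \<in> D}"

definition in_deg :: "('a \<times> 'a) set \<Rightarrow> 'a \<Rightarrow> nat" where
  "in_deg D v = card {w. (w,v) \<in> D}"

definition in_S3 :: "'a set \<Rightarrow> 'a set set \<Rightarrow> bool" where
  "in_S3 V E \<longleftrightarrow>
     (\<forall>\<beta> :: 'a \<Rightarrow> int. (\<forall>v\<in>V. \<beta> v \<in> {0,1,2}) \<and> (\<Sum>v\<in>V. \<beta> v) mod 3 = 0 \<longrightarrow>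
        (\<exists>D. is_orientation E D \<and> strongly_connected V D \<and>
             (\<forall>v\<in>V. (int (out_deg D v) - int (in_deg D v)) mod 3 = \<beta> v mod 3)))"

definition Kmn_vertices :: "nat \<Rightarrow> nat \<Rightarrow> (nat + nat) set" where
  "Kmn_vertices m n = Inl ` {..<m} \<union> Inr ` {..<n}"

definition Kmn_edges :: "nat \<Rightarrow> nat \<Rightarrow> (nat + nat) set set" where
  "Kmn_edges m n = {{Inl i, Inr j} | i j. i < m \<and> j < n}"

end

theory Submission
  imports Defs "HOL-Number_Theory.Cong"
begin

text \<open>Orient each edge of \<open>K\<^sub>m\<^sub>,\<^sub>n\<close> by a 0/1 matrix: \<open>x i j\<close> means the arc \<open>Inl i \<rightarrow> Inr j\<close>.
  Since \<open>d\<^sup>+ - d\<^sup>- = 2 d\<^sup>+ - deg\<close> and 2 is its own inverse modulo 3, the boundary \<open>\<beta>\<close> prescribes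
  the row sums of \<open>x\<close> and the column sums of its complement modulo 3, and these prescribed
  residues add up to \<open>m n = |E|\<close>. Strong connectivity holds as soon as the top-left \<open>4 \<times> 4\<close>
  block contains an 8-cycle and every other row and column has entries of both kinds inside the
  core. Such a matrix is built explicitly: rows below the core are prefixes of length 1, 2 or 3,
  the top four entries of each column are chosen to fix the column residue, and exchanging the
  entries of rows \<open>r\<close> and 3 in the columns \<open>4 + 2r\<close>, \<open>5 + 2r\<close> fixes the rows \<open>r < 3\<close>
  without disturbing any column (this needs \<open>n \<ge> 10\<close>). Row 3 is then right by double counting.\<close>

lemma cycle_in_rtrancl:
  assumes arcs: "\<forall>k<N. (c k, c (Suc k mod N)) \<in> R" and "i < N" "j < N"
  shows "(c i, c j) \<in> R\<^sup>*"
proof -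
  have "(c i, c ((i + d) mod N)) \<in> R\<^sup>*" for d
  proof (induction d)
    case 0
    show ?case using \<open>i < N\<close> by simp
  next
    case (Suc d)
    have "(c ((i + d) mod N), c (Suc ((i + d) mod N) mod N)) \<in> R"
      using arcs \<open>i < N\<close> by simp
    then show ?case using Suc.IH by (simp add: mod_Suc_eq)
  qed
  from this[of "N - i + j"] show ?thesis using assms by simp
qed

lemma strongly_connectedI_hub:
  assumes "\<forall>v\<in>V. (h, v) \<in> R\<^sup>* \<and> (v, h) \<in> R\<^sup>*"
  shows "strongly_connected V R"
  using assms unfolding strongly_connected_def by (meson rtrancl_trans)

lemma net_degree_mod3:
  assumes "out + inn = N" "[out = 2 * (b + N)] (mod 3)"
  shows "[out - inn = b] (mod (3::int))"
  using assms unfolding cong_def by presburger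

lemma card_Collect_less_split:
  fixes k m :: nat
  assumes "k \<le> m"
  shows "card {i. i < m \<and> P i} = card {i. i < k \<and> P i} + card {i. k \<le> i \<and> i < m \<and> P i}"
proof -
  have "{i. i < m \<and> P i} = {i. i < k \<and> P i} \<union> {i. k \<le> i \<and> i < m \<and> P i}"
    using assms by auto
  moreover have "{i. i < k \<and> P i} \<inter> {i. k \<le> i \<and> i < m \<and> P i} = {}"
    by auto
  moreover have "finite {i. i < k \<and> P i}" "finite {i. k \<le> i \<and> i < m \<and> P i}"
    by auto
  ultimately show ?thesis by (simp add: card_Un_disjoint)
qed

lemma card_Collect_less_Suc:
  "card {i. i < Suc k \<and> P i} = card {i. i < k \<and> P i} + of_bool (P k)"
proof -
  have "{i. i < Suc k \<and> P i} = {i. i < k \<and> P i} \<union> (if P k then {k} else {})"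
    by (auto simp: less_Suc_eq)
  then show ?thesis by (auto simp: card_insert_if)
qed

lemma card_Collect_less_4:
  "card {i. i < (4::nat) \<and> P i} = of_bool (P 0) + of_bool (P 1) + of_bool (P 2) + of_bool (P 3)"
proof -
  have four: "{i. i < (4::nat) \<and> P i} = {i. i < Suc (Suc (Suc (Suc 0))) \<and> P i}"
    by (simp add: eval_nat_numeral)
  show ?thesis
    unfolding four card_Collect_less_Suc by (simp add: numeral_2_eq_2 numeral_3_eq_3)
qed

lemma card_Collect_less_plus_not:
  "card {k. k < N \<and> P k} + card {k. k < N \<and> \<not> P k} = (N::nat)"
proof -
  have "{k. k < N \<and> P k} \<union> {k. k < N \<and> \<not> P k} = {..<N}" by auto
  moreover have "{k. k < N \<and> P k} \<inter> {k. k < N \<and> \<not> P k} = {}" by auto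
  ultimately show ?thesis using card_Un_disjoint[of "{k. k < N \<and> P k}" "{k. k < N \<and> \<not> P k}"]
    by simp
qed

lemma sum_card_true_plus_sum_card_false:
  fixes m n :: nat and x :: "nat \<Rightarrow> nat \<Rightarrow> bool"
  shows "(\<Sum>i<m. card {j. j < n \<and> x i j}) + (\<Sum>j<n. card {i. i < m \<and> \<not> x i j}) = m * n"
proof -
  have count: "card {k. k < N \<and> P k} = (\<Sum>k<N. of_bool (P k))" for N and P :: "nat \<Rightarrow> bool"
    by (simp add: Int_def lessThan_def conj_commute)
  have "(\<Sum>i<m. card {j. j < n \<and> x i j}) = (\<Sum>j<n. card {i. i < m \<and> x i j})"
    unfolding count by (rule sum.swap)
  then show ?thesis
    by (simp add: sum.distrib[symmetric] card_Collect_less_plus_not)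
qed

lemma cong_remaining_summand:
  fixes f g :: "'a \<Rightarrow> nat"
  assumes "finite A" "a \<in> A" "[sum f A = sum g A] (mod p)" "\<forall>b\<in>A - {a}. [f b = g b] (mod p)"
  shows "[f a = g a] (mod p)"
proof -
  have "[f a + sum f (A - {a}) = g a + sum g (A - {a})] (mod p)"
    using assms(3) unfolding sum.remove[OF assms(1,2)] .
  moreover have "[sum f (A - {a}) = sum g (A - {a})] (mod p)"
    using assms(4) by (intro cong_sum) auto
  ultimately have "[f a + sum g (A - {a}) = g a + sum g (A - {a})] (mod p)"
    by (meson cong_add cong_refl cong_sym cong_trans)
  then show ?thesis by (simp add: cong_add_rcancel_nat)
qed

section \<open>Orientations of \<open>K\<^sub>m\<^sub>,\<^sub>n\<close> given by 0/1 matrices\<close>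

definition out_target :: "nat \<Rightarrow> int \<Rightarrow> nat" where
  "out_target N b = nat ((2 * (b + int N)) mod 3)"

lemma cong_out_target: "[int (out_target N b) = 2 * (b + int N)] (mod 3)"
  by (simp add: out_target_def cong_def)

definition matrix_orientation ::
    "nat \<Rightarrow> nat \<Rightarrow> (nat \<Rightarrow> nat \<Rightarrow> bool) \<Rightarrow> ((nat + nat) \<times> (nat + nat)) set" where
  "matrix_orientation m n x =
     {(Inl i, Inr j) | i j. i < m \<and> j < n \<and> x i j} \<union> {(Inr j, Inl i) | i j. i < m \<and> j < n \<and> \<not> x i j}"

lemma matrix_orientation_Inl_Inr [simp]:
    "(Inl i, Inr j) \<in> matrix_orientation m n x \<longleftrightarrow> i < m \<and> j < n \<and> x i j"
  and matrix_orientation_Inr_Inl [simp]: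
    "(Inr j, Inl i) \<in> matrix_orientation m n x \<longleftrightarrow> i < m \<and> j < n \<and> \<not> x i j"
  and matrix_orientation_Inl_Inl [simp]: "(Inl i, Inl i') \<notin> matrix_orientation m n x"
  and matrix_orientation_Inr_Inr [simp]: "(Inr j, Inr j') \<notin> matrix_orientation m n x"
  by (auto simp: matrix_orientation_def)

lemma is_orientation_matrix_orientation:
  "is_orientation (Kmn_edges m n) (matrix_orientation m n x)"
  unfolding is_orientation_def
proof (intro conjI allI impI ballI)
  fix a assume "a \<in> matrix_orientation m n x"
  then show "case a of (u, v) \<Rightarrow> {u, v} \<in> Kmn_edges m n \<and> u \<noteq> v"
    unfolding matrix_orientation_def Kmn_edges_def by (auto simp: insert_commute)
next
  fix u v assume "{u, v} \<in> Kmn_edges m n \<and> u \<noteq> v"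
  then obtain i j where "{u, v} = {Inl i, Inr j}" "i < m" "j < n"
    unfolding Kmn_edges_def by auto
  then show "(u, v) \<in> matrix_orientation m n x \<longleftrightarrow> (v, u) \<notin> matrix_orientation m n x"
    by (auto simp: doubleton_eq_iff)
qed

lemma
  assumes "i < m"
  shows out_deg_matrix_orientation_Inl:
      "out_deg (matrix_orientation m n x) (Inl i) = card {j. j < n \<and> x i j}"
    and in_deg_matrix_orientation_Inl:
      "in_deg (matrix_orientation m n x) (Inl i) = card {j. j < n \<and> \<not> x i j}"
proof -
  have "{w. (Inl i, w) \<in> matrix_orientation m n x} = Inr ` {j. j < n \<and> x i j}"
    "{w. (w, Inl i) \<in> matrix_orientation m n x} = Inr ` {j. j < n \<and> \<not> x i j}"
    using assms unfolding matrix_orientation_def by auto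
  then show "out_deg (matrix_orientation m n x) (Inl i) = card {j. j < n \<and> x i j}"
    "in_deg (matrix_orientation m n x) (Inl i) = card {j. j < n \<and> \<not> x i j}"
    unfolding out_deg_def in_deg_def by (simp_all add: card_image)
qed

lemma
  assumes "j < n"
  shows out_deg_matrix_orientation_Inr:
      "out_deg (matrix_orientation m n x) (Inr j) = card {i. i < m \<and> \<not> x i j}"
    and in_deg_matrix_orientation_Inr:
      "in_deg (matrix_orientation m n x) (Inr j) = card {i. i < m \<and> x i j}"
proof -
  have "{w. (Inr j, w) \<in> matrix_orientation m n x} = Inl ` {i. i < m \<and> \<not> x i j}"
    "{w. (w, Inr j) \<in> matrix_orientation m n x} = Inl ` {i. i < m \<and> x i j}"
    using assms unfolding matrix_orientation_def by auto
  then show "out_deg (matrix_orientation m n x) (Inr j) = card {i. i < m \<and> \<not> x i j}"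
    "in_deg (matrix_orientation m n x) (Inr j) = card {i. i < m \<and> x i j}"
    unfolding out_deg_def in_deg_def by (simp_all add: card_image)
qed

lemma matrix_orientation_net_degree:
  assumes rows: "\<forall>i<m. [card {j. j < n \<and> x i j} = out_target n (\<beta> (Inl i))] (mod 3)"
    and cols: "\<forall>j<n. [card {i. i < m \<and> \<not> x i j} = out_target m (\<beta> (Inr j))] (mod 3)"
    and "v \<in> Kmn_vertices m n"
  shows "(int (out_deg (matrix_orientation m n x) v) - int (in_deg (matrix_orientation m n x) v)) mod 3
           = \<beta> v mod 3"
proof -
  have net: "[int out - int inn = b] (mod 3)"
    if "out + inn = N" "[out = out_target N b] (mod 3)" for out inn N b
  proof (rule net_degree_mod3)
    show "int out + int inn = int N" using that(1) by simp
    have "[int out = int (out_target N b)] (mod 3)"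
      using that(2) by (metis cong_int_iff of_nat_numeral)
    then show "[int out = 2 * (b + int N)] (mod 3)"
      using cong_out_target cong_trans by blast
  qed
  from \<open>v \<in> Kmn_vertices m n\<close>
  consider (left) i where "v = Inl i" "i < m" | (right) j where "v = Inr j" "j < n"
    unfolding Kmn_vertices_def by auto
  then show ?thesis
  proof cases
    case left
    then show ?thesis using net[OF card_Collect_less_plus_not rows[rule_format]]
      by (simp add: out_deg_matrix_orientation_Inl in_deg_matrix_orientation_Inl cong_def)
  next
    case right
    then show ?thesis
      using net[OF _ cols[rule_format], of j "card {i. i < m \<and> x i j}"]
        card_Collect_less_plus_not[of m "\<lambda>i. x i j"]
      by (simp add: out_deg_matrix_orientation_Inr in_deg_matrix_orientation_Inr cong_def add.commute)
  qed
qed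

text \<open>The first clause says that \<open>Inl 0, Inr 0, Inl 1, \<dots>, Inr 3\<close> is a directed cycle.\<close>

definition core_linked :: "nat \<Rightarrow> nat \<Rightarrow> (nat \<Rightarrow> nat \<Rightarrow> bool) \<Rightarrow> bool" where
  "core_linked m n x \<longleftrightarrow>
     (\<forall>r<4. x r r \<and> \<not> x ((r + 1) mod 4) r) \<and>
     (\<forall>i. 4 \<le> i \<and> i < m \<longrightarrow> (\<exists>c<4. x i c) \<and> (\<exists>c<4. \<not> x i c)) \<and>
     (\<forall>j. 4 \<le> j \<and> j < n \<longrightarrow> (\<exists>r<4. x r j) \<and> (\<exists>r<4. \<not> x r j))"

lemma core_strongly_connected:
  assumes "4 \<le> m" "4 \<le> n" and cycle: "\<forall>r<4. x r r \<and> \<not> x ((r + 1) mod 4) r"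
    and "r < 4" "r' < 4"
  shows "(Inl r, Inl r') \<in> (matrix_orientation m n x)\<^sup>*"
    and "(Inl r, Inr r') \<in> (matrix_orientation m n x)\<^sup>*"
    and "(Inr r, Inl r') \<in> (matrix_orientation m n x)\<^sup>*"
proof -
  let ?R = "matrix_orientation m n x"
  have arcs: "(Inl k, Inr k) \<in> ?R" "(Inr k, Inl (Suc k mod 4)) \<in> ?R" if "k < 4" for k
    using cycle[rule_format, OF that] that assms(1,2) by simp_all
  have rows: "(Inl k, Inl k') \<in> ?R\<^sup>*" if "k < 4" "k' < 4" for k k'
  proof -
    have "(Inl k, Inl k') \<in> (?R O ?R)\<^sup>*"
      using cycle_in_rtrancl[of 4 Inl] arcs that by blast
    moreover have "(?R O ?R)\<^sup>* \<subseteq> ?R\<^sup>*"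
      by (rule rtrancl_subset_rtrancl) auto
    ultimately show ?thesis by blast
  qed
  show "(Inl r, Inl r') \<in> ?R\<^sup>*"
    using rows assms(4,5) by blast
  show "(Inl r, Inr r') \<in> ?R\<^sup>*"
    using rows[of r r'] arcs(1)[of r'] assms(4,5) by (meson rtrancl_into_rtrancl)
  show "(Inr r, Inl r') \<in> ?R\<^sup>*"
    using rows[of "Suc r mod 4" r'] arcs(2)[of r] assms(4,5)
    by (meson converse_rtrancl_into_rtrancl mod_less_divisor zero_less_numeral)
qed

lemma strongly_connected_matrix_orientation:
  assumes "4 \<le> m" "4 \<le> n" "core_linked m n x"
  shows "strongly_connected (Kmn_vertices m n) (matrix_orientation m n x)"
proof (rule strongly_connectedI_hub)
  let ?R = "(matrix_orientation m n x)\<^sup>*"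
  note core = core_strongly_connected[OF assms(1,2)]
  have cycle: "\<forall>r<4. x r r \<and> \<not> x ((r + 1) mod 4) r"
    using assms(3) unfolding core_linked_def by blast
  show "\<forall>v\<in>Kmn_vertices m n. (Inl 0, v) \<in> ?R \<and> (v, Inl 0) \<in> ?R"
  proof
    fix v assume "v \<in> Kmn_vertices m n"
    then consider (core_row) i where "v = Inl i" "i < 4" | (core_col) j where "v = Inr j" "j < 4"
      | (row) i where "v = Inl i" "4 \<le> i" "i < m" | (col) j where "v = Inr j" "4 \<le> j" "j < n"
      unfolding Kmn_vertices_def by force
    then show "(Inl 0, v) \<in> ?R \<and> (v, Inl 0) \<in> ?R"
    proof cases
      case row
      then obtain c c' where "c < 4" "x i c" "c' < 4" "\<not> x i c'"
        using assms(3) unfolding core_linked_def by blast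
      then have "(Inl i, Inr c) \<in> matrix_orientation m n x" "(Inr c', Inl i) \<in> matrix_orientation m n x"
        using row assms(1,2) by simp_all
      moreover have "(Inl 0, Inr c') \<in> ?R" "(Inr c, Inl 0) \<in> ?R"
        using core[OF cycle] \<open>c < 4\<close> \<open>c' < 4\<close> by simp_all
      ultimately show ?thesis
        using row by (meson rtrancl_into_rtrancl converse_rtrancl_into_rtrancl)
    next
      case col
      then obtain r r' where "r < 4" "x r j" "r' < 4" "\<not> x r' j"
        using assms(3) unfolding core_linked_def by blast
      then have "(Inl r, Inr j) \<in> matrix_orientation m n x" "(Inr j, Inl r') \<in> matrix_orientation m n x"
        using col assms(1) by simp_all
      moreover have "(Inl 0, Inl r) \<in> ?R" "(Inl r', Inl 0) \<in> ?R"
        using core[OF cycle] \<open>r < 4\<close> \<open>r' < 4\<close> by simp_all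
      ultimately show ?thesis
        using col by (meson rtrancl_into_rtrancl converse_rtrancl_into_rtrancl)
    qed (use core[OF cycle] in simp_all)
  qed
qed

section \<open>An explicit matrix with prescribed residues\<close>

definition residue_gap :: "nat \<Rightarrow> nat \<Rightarrow> nat" where
  "residue_gap a b = (a + 3 - b mod 3) mod 3"

lemma residue_gap_less_3: "residue_gap a b < 3"
  by (simp add: residue_gap_def)

lemma cong_residue_gap_add: "[residue_gap a b + b = a] (mod 3)"
proof -
  obtain q r where b: "b = r + 3 * q" "r < 3"
    using mod_less_divisor[of 3 b] div_mult_mod_eq[of b 3]
    by (metis add.commute mult.commute zero_less_numeral)
  then have eq: "a + 3 - b mod 3 + b = a + 3 * (1 + q)" by simp
  have "(residue_gap a b + b) mod 3 = (a + 3 - b mod 3 + b) mod 3"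
    unfolding residue_gap_def by (simp only: mod_add_left_eq)
  also have "\<dots> = a mod 3" by (simp only: eq mod_mult_self2)
  finally show ?thesis unfolding cong_def .
qed

definition prefix_len :: "nat \<Rightarrow> nat" where
  "prefix_len s = (if s mod 3 = 0 then 3 else s mod 3)"

lemma prefix_len_pos: "0 < prefix_len s"
  and prefix_len_le_3: "prefix_len s \<le> 3"
  and cong_prefix_len: "[prefix_len s = s] (mod 3)"
  by (auto simp: prefix_len_def cong_def)

definition toggle_row :: "nat \<Rightarrow> nat" where
  "toggle_row j = (j - 4) div 2 mod 3"

lemma toggle_row_less_3: "toggle_row j < 3"
  by (simp add: toggle_row_def)

lemma toggle_row_eq_iff:
  assumes "4 \<le> j" "j < 10" "r < 3"
  shows "toggle_row j = r \<longleftrightarrow> j \<in> {4 + 2 * r ..< 6 + 2 * r}"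
proof -
  have "j \<in> {4, 5, 6, 7, 8, 9}" "r \<in> {0, 1, 2}" using assms by auto
  then show ?thesis unfolding toggle_row_def by auto
qed

locale residue_matrix =
  fixes m n :: nat and \<sigma> \<rho> :: "nat \<Rightarrow> nat"
  assumes four_le_m: "4 \<le> m" and ten_le_n: "10 \<le> n"
begin

definition core_pad :: "nat \<Rightarrow> nat" where
  "core_pad c = residue_gap (\<rho> c) (1 + card {i. 4 \<le> i \<and> i < m \<and> prefix_len (\<sigma> i) \<le> c})"

definition col_pad :: "nat \<Rightarrow> nat" where
  "col_pad j = residue_gap (\<rho> j) (m - 3)"

text \<open>In every column the
  top four rows contain exactly \<open>1 + pad\<close> zeros, the pad fixing the column residue. For
  \<open>j \<ge> 4\<close>, the flag \<open>t j\<close> exchanges the entries of rows 3 and \<open>toggle_row j\<close>; this keeps the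
  column sum and adds one to row \<open>toggle_row j\<close>.\<close>

definition entry :: "(nat \<Rightarrow> bool) \<Rightarrow> nat \<Rightarrow> nat \<Rightarrow> bool" where
  "entry t i j =
     (if 4 \<le> i then j < prefix_len (\<sigma> i)
      else if j < 4 then
        i = j \<or> (i = (j + 2) mod 4 \<and> core_pad j = 0) \<or> (i = (j + 3) mod 4 \<and> core_pad j < 2)
      else
        (if t j then i = toggle_row j else i = 3) \<or>
        (i = (toggle_row j + 1) mod 3 \<and> col_pad j = 0) \<or>
        (i = (toggle_row j + 2) mod 3 \<and> col_pad j < 2))"

definition row_gap :: "nat \<Rightarrow> nat" where
  "row_gap r = residue_gap (\<sigma> r) (card {j. j < n \<and> entry (\<lambda>_. False) r j})"

definition toggled :: "nat \<Rightarrow> bool" where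
  "toggled j \<longleftrightarrow> 4 \<le> j \<and> j < 10 \<and> (j - 4) mod 2 < row_gap (toggle_row j)"

lemma core_pad_less_3: "core_pad c < 3"
  and col_pad_less_3: "col_pad j < 3"
  by (simp_all add: core_pad_def col_pad_def residue_gap_less_3)

lemma core_linked_entry: "core_linked m n (entry t)"
proof -
  have "entry t r r \<and> \<not> entry t ((r + 1) mod 4) r" if "r < 4" for r
  proof -
    from that have "r = 0 \<or> r = 1 \<or> r = 2 \<or> r = 3" by auto
    then show ?thesis by (elim disjE) (simp_all add: entry_def)
  qed
  moreover have "(\<exists>c<4. entry t i c) \<and> (\<exists>c<4. \<not> entry t i c)" if "4 \<le> i" for i
  proof -
    have "entry t i 0" "\<not> entry t i 3"
      using that prefix_len_pos prefix_len_le_3 by (simp_all add: entry_def not_less)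
    moreover have "(0::nat) < 4" "(3::nat) < 4" by simp_all
    ultimately show ?thesis by blast
  qed
  moreover have "(\<exists>r<4. entry t r j) \<and> (\<exists>r<4. \<not> entry t r j)" if "4 \<le> j" for j
  proof -
    have "toggle_row j = 0 \<or> toggle_row j = 1 \<or> toggle_row j = 2"
      using toggle_row_less_3[of j] by auto
    then have "entry t (toggle_row j) j \<noteq> entry t 3 j"
      using that by (elim disjE) (auto simp: entry_def)
    moreover have "toggle_row j < 4" "(3::nat) < 4" using toggle_row_less_3[of j] by simp_all
    ultimately show ?thesis by blast
  qed
  ultimately show ?thesis unfolding core_linked_def by blast
qed

lemma card_not_entry_core_rows:
  "card {i. i < 4 \<and> \<not> entry t i j} = 1 + (if j < 4 then core_pad j else col_pad j)"
proof (cases "j < 4")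
  case True
  have "j = 0 \<or> j = 1 \<or> j = 2 \<or> j = 3" "core_pad j = 0 \<or> core_pad j = 1 \<or> core_pad j = 2"
    using True core_pad_less_3[of j] by auto
  then show ?thesis
    unfolding card_Collect_less_4 using True by (elim disjE) (simp_all add: entry_def)
next
  case False
  have "toggle_row j = 0 \<or> toggle_row j = 1 \<or> toggle_row j = 2"
    "col_pad j = 0 \<or> col_pad j = 1 \<or> col_pad j = 2"
    using toggle_row_less_3[of j] col_pad_less_3[of j] by auto
  then show ?thesis
    unfolding card_Collect_less_4 using False by (cases "t j"; elim disjE) (simp_all add: entry_def)
qed

lemma card_not_entry_tail_rows:
  "card {i. 4 \<le> i \<and> i < m \<and> \<not> entry t i j} =
     (if j < 4 then card {i. 4 \<le> i \<and> i < m \<and> prefix_len (\<sigma> i) \<le> j} else m - 4)"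
proof (cases "j < 4")
  case False
  then have "{i. 4 \<le> i \<and> i < m \<and> \<not> entry t i j} = {4..<m}"
    by (auto simp: entry_def dest: less_le_trans[OF _ prefix_len_le_3])
  then show ?thesis using False by simp
next
  case True
  then show ?thesis by (simp, intro arg_cong[where f = card]) (auto simp: entry_def not_less)
qed

lemma cong_card_not_entry_column: "[card {i. i < m \<and> \<not> entry t i j} = \<rho> j] (mod 3)"
proof (cases "j < 4")
  case True
  let ?Z = "card {i. 4 \<le> i \<and> i < m \<and> prefix_len (\<sigma> i) \<le> j}"
  have "card {i. i < m \<and> \<not> entry t i j} = core_pad j + (1 + ?Z)"
    unfolding card_Collect_less_split[OF four_le_m] card_not_entry_core_rows card_not_entry_tail_rows
    using True by simp
  then show ?thesis unfolding core_pad_def using cong_residue_gap_add[of "\<rho> j" "1 + ?Z"] by simp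
next
  case False
  have "card {i. i < m \<and> \<not> entry t i j} = col_pad j + (m - 3)"
    unfolding card_Collect_less_split[OF four_le_m] card_not_entry_core_rows card_not_entry_tail_rows
    using False four_le_m by simp
  then show ?thesis unfolding col_pad_def using cong_residue_gap_add[of "\<rho> j" "m - 3"] by simp
qed

lemma cong_card_entry_tail_row:
  assumes "4 \<le> i"
  shows "[card {j. j < n \<and> entry t i j} = \<sigma> i] (mod 3)"
proof -
  have "{j. j < n \<and> entry t i j} = {..<prefix_len (\<sigma> i)}"
    using assms prefix_len_le_3[of "\<sigma> i"] ten_le_n by (auto simp: entry_def)
  then show ?thesis using cong_prefix_len by simp
qed

lemma toggled_in_row_iff:
  assumes "r < 3"
  shows "toggled j \<and> toggle_row j = r \<longleftrightarrow> j \<in> {4 + 2 * r ..< 4 + 2 * r + row_gap r}"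
proof -
  have "row_gap r < 3" by (simp add: row_gap_def residue_gap_less_3)
  have "toggled j \<and> toggle_row j = r \<longleftrightarrow>
      (j = 4 + 2 * r \<or> j = 5 + 2 * r) \<and> (j - 4) mod 2 < row_gap r"
    using toggle_row_eq_iff[of j r] assms unfolding toggled_def by auto
  also have "\<dots> \<longleftrightarrow> (j = 4 + 2 * r \<and> 0 < row_gap r) \<or> (j = 5 + 2 * r \<and> 1 < row_gap r)"
    by auto
  also have "\<dots> \<longleftrightarrow> j \<in> {4 + 2 * r ..< 4 + 2 * r + row_gap r}"
    using \<open>row_gap r < 3\<close> by auto
  finally show ?thesis .
qed

lemma entry_toggled_row_iff:
  assumes "r < 3"
  shows "entry toggled r j \<longleftrightarrow> entry (\<lambda>_. False) r j \<or> toggled j \<and> toggle_row j = r"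
    and "toggled j \<and> toggle_row j = r \<Longrightarrow> \<not> entry (\<lambda>_. False) r j"
proof -
  have "toggled j \<Longrightarrow> 4 \<le> j" by (simp add: toggled_def)
  moreover have "entry t r j \<longleftrightarrow>
      t j \<and> r = toggle_row j \<or> r = (toggle_row j + 1) mod 3 \<and> col_pad j = 0 \<or>
      r = (toggle_row j + 2) mod 3 \<and> col_pad j < 2" if "4 \<le> j" for t
    using assms that by (simp add: entry_def)
  moreover have "toggle_row j \<noteq> (toggle_row j + 1) mod 3" "toggle_row j \<noteq> (toggle_row j + 2) mod 3"
    using toggle_row_less_3[of j] by (auto simp: mod_Suc)
  moreover have "entry toggled r j \<longleftrightarrow> entry (\<lambda>_. False) r j" if "j < 4"
    using assms that by (simp add: entry_def)
  ultimately show "entry toggled r j \<longleftrightarrow> entry (\<lambda>_. False) r j \<or> toggled j \<and> toggle_row j = r"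
    "toggled j \<and> toggle_row j = r \<Longrightarrow> \<not> entry (\<lambda>_. False) r j"
    by (metis not_le)+
qed

lemma cong_card_entry_toggled_row:
  assumes "r < 3"
  shows "[card {j. j < n \<and> entry toggled r j} = \<sigma> r] (mod 3)"
proof -
  let ?B = "{4 + 2 * r ..< 4 + 2 * r + row_gap r}"
  have "row_gap r < 3" by (simp add: row_gap_def residue_gap_less_3)
  then have "?B \<subseteq> {..<n}" using assms ten_le_n by auto
  then have "{j. j < n \<and> entry toggled r j} = {j. j < n \<and> entry (\<lambda>_. False) r j} \<union> ?B"
    using entry_toggled_row_iff(1)[OF assms] toggled_in_row_iff[OF assms] by auto
  moreover have "{j. j < n \<and> entry (\<lambda>_. False) r j} \<inter> ?B = {}"
    using entry_toggled_row_iff(2)[OF assms] toggled_in_row_iff[OF assms] by auto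
  ultimately have "card {j. j < n \<and> entry toggled r j} =
      row_gap r + card {j. j < n \<and> entry (\<lambda>_. False) r j}"
    by (simp add: card_Un_disjoint)
  then show ?thesis unfolding row_gap_def using cong_residue_gap_add by simp
qed

lemma cong_card_entry_toggled:
  assumes sum: "[(\<Sum>i<m. \<sigma> i) + (\<Sum>j<n. \<rho> j) = m * n] (mod 3)" and "i < m"
  shows "[card {j. j < n \<and> entry toggled i j} = \<sigma> i] (mod 3)"
proof -
  let ?row = "\<lambda>i. card {j. j < n \<and> entry toggled i j}"
  have other_rows: "\<forall>i\<in>{..<m} - {3}. [?row i = \<sigma> i] (mod 3)"
  proof
    fix i assume "i \<in> {..<m} - {3}"
    then have "i < 3 \<or> 4 \<le> i" by auto
    then show "[?row i = \<sigma> i] (mod 3)"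
      using cong_card_entry_toggled_row cong_card_entry_tail_row by blast
  qed
  have total: "[(\<Sum>i<m. ?row i) + (\<Sum>j<n. card {i. i < m \<and> \<not> entry toggled i j})
      = (\<Sum>i<m. \<sigma> i) + (\<Sum>j<n. \<rho> j)] (mod 3)"
    unfolding sum_card_true_plus_sum_card_false using sum by (simp add: cong_sym)
  have cols: "[(\<Sum>j<n. card {i. i < m \<and> \<not> entry toggled i j}) = (\<Sum>j<n. \<rho> j)] (mod 3)"
    using cong_card_not_entry_column by (rule cong_sum)
  have rows_total: "[(\<Sum>i<m. ?row i) = (\<Sum>i<m. \<sigma> i)] (mod 3)"
    using cong_trans[OF total cong_add[OF cong_refl cong_sym[OF cols]]]
    by (simp add: cong_add_rcancel_nat)
  have "[?row 3 = \<sigma> 3] (mod 3)"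
    using cong_remaining_summand[OF _ _ rows_total other_rows] four_le_m by simp
  then show ?thesis
    using other_rows \<open>i < m\<close> by (cases "i = 3") simp_all
qed

end

lemma exists_core_linked_residue_matrix:
  fixes \<sigma> \<rho> :: "nat \<Rightarrow> nat"
  assumes "4 \<le> m" "10 \<le> n" "[(\<Sum>i<m. \<sigma> i) + (\<Sum>j<n. \<rho> j) = m * n] (mod 3)"
  shows "\<exists>x. core_linked m n x \<and> (\<forall>i<m. [card {j. j < n \<and> x i j} = \<sigma> i] (mod 3)) \<and>
    (\<forall>j<n. [card {i. i < m \<and> \<not> x i j} = \<rho> j] (mod 3))"
proof -
  interpret residue_matrix m n \<sigma> \<rho>
    using assms(1,2) by unfold_locales
  show ?thesis
    using core_linked_entry cong_card_not_entry_column cong_card_entry_toggled[OF assms(3)] by blast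
qed

lemma sum_Kmn_vertices:
  "(\<Sum>v\<in>Kmn_vertices m n. f v) = (\<Sum>i<m. f (Inl i)) + (\<Sum>j<n. f (Inr j))"
  unfolding Kmn_vertices_def by (subst sum.union_disjoint) (auto simp: sum.reindex)

lemma cong_sum_out_target:
  "[int (\<Sum>a\<in>A. out_target N (b a)) = 2 * (sum b A + int (card A) * int N)] (mod 3)"
proof -
  have "[int (\<Sum>a\<in>A. out_target N (b a)) = (\<Sum>a\<in>A. 2 * (b a + int N))] (mod 3)"
    unfolding of_nat_sum by (rule cong_sum) (rule cong_out_target)
  also have "(\<Sum>a\<in>A. 2 * (b a + int N)) = 2 * (sum b A + int (card A) * int N)"
    by (simp add: sum.distrib sum_distrib_left)
  finally show ?thesis .
qed

lemma cong_sum_out_targets_Kmn: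
  assumes "(\<Sum>v\<in>Kmn_vertices m n. \<beta> v) mod 3 = 0"
  shows "[(\<Sum>i<m. out_target n (\<beta> (Inl i))) + (\<Sum>j<n. out_target m (\<beta> (Inr j))) = m * n] (mod 3)"
proof -
  let ?L = "\<Sum>i<m. \<beta> (Inl i)" and ?R = "\<Sum>j<n. \<beta> (Inr j)"
  obtain k where k: "?L + ?R = 3 * k"
    using assms unfolding sum_Kmn_vertices by (metis dvd_def mod_0_imp_dvd)
  have "[int (\<Sum>i<m. out_target n (\<beta> (Inl i))) = 2 * (?L + int m * int n)] (mod 3)"
    "[int (\<Sum>j<n. out_target m (\<beta> (Inr j))) = 2 * (?R + int n * int m)] (mod 3)"
    using cong_sum_out_target[of n "\<lambda>i. \<beta> (Inl i)" "{..<m}"]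
      cong_sum_out_target[of m "\<lambda>j. \<beta> (Inr j)" "{..<n}"] by simp_all
  then have "[int ((\<Sum>i<m. out_target n (\<beta> (Inl i))) + (\<Sum>j<n. out_target m (\<beta> (Inr j))))
      = 2 * (?L + int m * int n) + 2 * (?R + int n * int m)] (mod 3)"
    unfolding of_nat_add by (rule cong_add)
  also have "2 * (?L + int m * int n) + 2 * (?R + int n * int m) = int (m * n) + 3 * (2 * k + int (m * n))"
    using k by (simp add: algebra_simps)
  also have "[\<dots> = int (m * n)] (mod 3)"
    unfolding cong_def by (rule mod_mult_self2)
  finally show ?thesis by (metis cong_int_iff of_nat_numeral)
qed

theorem mainTheorem12:
  fixes m n :: nat
  assumes "m \<ge> 4" and "n \<ge> 10"
  shows "in_S3 (Kmn_vertices m n) (Kmn_edges m n)"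
  unfolding in_S3_def
proof (intro allI impI)
  fix \<beta> :: "nat + nat \<Rightarrow> int"
  assume "(\<forall>v\<in>Kmn_vertices m n. \<beta> v \<in> {0, 1, 2}) \<and> (\<Sum>v\<in>Kmn_vertices m n. \<beta> v) mod 3 = 0"
  then have "[(\<Sum>i<m. out_target n (\<beta> (Inl i))) + (\<Sum>j<n. out_target m (\<beta> (Inr j))) = m * n] (mod 3)"
    by (intro cong_sum_out_targets_Kmn) simp
  then obtain x where "core_linked m n x"
    and "\<forall>i<m. [card {j. j < n \<and> x i j} = out_target n (\<beta> (Inl i))] (mod 3)"
    and "\<forall>j<n. [card {i. i < m \<and> \<not> x i j} = out_target m (\<beta> (Inr j))] (mod 3)"
    using exists_core_linked_residue_matrix assms by blast
  then show "\<exists>D. is_orientation (Kmn_edges m n) D \<and> strongly_connected (Kmn_vertices m n) D \<and>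
      (\<forall>v\<in>Kmn_vertices m n. (int (out_deg D v) - int (in_deg D v)) mod 3 = \<beta> v mod 3)"
    using assms
    by (intro exI[of _ "matrix_orientation m n x"] conjI ballI is_orientation_matrix_orientation
        strongly_connected_matrix_orientation matrix_orientation_net_degree) simp_all
qed

end
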